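(* Let $G$ be an $N$-cube Adinkra with heights disregarded (a valise $N$-cube Adinkra). Then $G$ is vertex-transitive up to the boson/fermion bipartition: for any two vertices $u,v$ that are both bosons or both fermions there is an automorphism of $G$ mapping $u$ to $v$.
   Context: An Adinkra of dimension $N$ is a finite connected simple graph $G=(V,E)$ together with: (1) a bipartition of $V$ into bosons and fermions such that every edge joins a boson and a fermion; (2) a height function (here disregarded); (3) a coloring of $E$ by colors $\{1,\dots,N\}$ such that each vertex is incident to exactly one edge of each color; (4) an edge parity $\pi:E\to\mathbb{Z}_2$ (parity $1$ = dashed). These must satisfy: every path with edge colors $(i,j)$, $i\neq j$, lies in a unique 4-cycle with colors $(i,j,i,j)$, and every such two-colored 4-cycle has an odd number of dashed edges. An $N$-cube Adinkra has $2^N$ vertices. Switching a vertex reverses the parity of all edges incident to it. An automorphism of $G$ is a permutation of $V$ preserving adjacency, edge colors and the bipartition, which becomes parity-preserving after switching some set of vertices. *)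

theory Defs
  imports Main
begin

text \<open>E is the (symmetric, irreflexive) adjacency relation, boson is the bipartition
  (boson v = True for bosons, False for fermions), col gives the color of an edge
  (meaningful only on edges), par gives the edge parity (True = dashed).\<close>

definition adinkra ::
  "nat \<Rightarrow> 'v set \<Rightarrow> ('v \<Rightarrow> 'v \<Rightarrow> bool) \<Rightarrow> ('v \<Rightarrow> bool)
     \<Rightarrow> ('v \<Rightarrow> 'v \<Rightarrow> nat) \<Rightarrow> ('v \<Rightarrow> 'v \<Rightarrow> bool) \<Rightarrow> bool" where
  "adinkra N V E boson col par \<longleftrightarrow>
     finite V \<and> V \<noteq> {} \<and>
     (\<forall>u v. E u v \<longrightarrow> u \<in> V \<and> v \<in> V) \<and>
     (\<forall>u v. E u v \<longrightarrow> E v u) \<and>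
     (\<forall>u. \<not> E u u) \<and>
     (\<forall>u\<in>V. \<forall>v\<in>V. E\<^sup>*\<^sup>* u v) \<and>
     (\<forall>u v. E u v \<longrightarrow> boson u \<noteq> boson v) \<and>
     (\<forall>u v. E u v \<longrightarrow> col u v = col v u \<and> col u v \<in> {1..N}) \<and>
     (\<forall>u v. E u v \<longrightarrow> par u v = par v u) \<and>
     (\<forall>v\<in>V. \<forall>i\<in>{1..N}. \<exists>!w. E v w \<and> col v w = i) \<and>
     (\<forall>u v w i j. i \<noteq> j \<and> E u v \<and> col u v = i \<and> E v w \<and> col v w = j \<longrightarrow>
        (\<exists>!x. E w x \<and> col w x = i \<and> E x u \<and> col x u = j)) \<and>
     (\<forall>u v w x i j. i \<noteq> j \<and> E u v \<and> col u v = i \<and> E v w \<and> col v w = j \<and>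
        E w x \<and> col w x = i \<and> E x u \<and> col x u = j \<longrightarrow>
        odd (of_bool (par u v) + of_bool (par v w) + of_bool (par w x)
             + of_bool (par x u) :: nat))"

definition cube_adinkra ::
  "nat \<Rightarrow> 'v set \<Rightarrow> ('v \<Rightarrow> 'v \<Rightarrow> bool) \<Rightarrow> ('v \<Rightarrow> bool)
     \<Rightarrow> ('v \<Rightarrow> 'v \<Rightarrow> nat) \<Rightarrow> ('v \<Rightarrow> 'v \<Rightarrow> bool) \<Rightarrow> bool" where
  "cube_adinkra N V E boson col par \<longleftrightarrow>
     adinkra N V E boson col par \<and> card V = 2 ^ N"

definition adinkra_automorphism ::
  "'v set \<Rightarrow> ('v \<Rightarrow> 'v \<Rightarrow> bool) \<Rightarrow> ('v \<Rightarrow> bool)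
     \<Rightarrow> ('v \<Rightarrow> 'v \<Rightarrow> nat) \<Rightarrow> ('v \<Rightarrow> 'v \<Rightarrow> bool) \<Rightarrow> ('v \<Rightarrow> 'v) \<Rightarrow> bool" where
  "adinkra_automorphism V E boson col par f \<longleftrightarrow>
     bij_betw f V V \<and>
     (\<forall>u\<in>V. \<forall>v\<in>V. E (f u) (f v) \<longleftrightarrow> E u v) \<and>
     (\<forall>u v. E u v \<longrightarrow> col (f u) (f v) = col u v) \<and>
     (\<forall>u\<in>V. boson (f u) = boson u) \<and>
     (\<exists>S \<subseteq> V. \<forall>u v. E u v \<longrightarrow>
        par (f u) (f v) = (par u v \<noteq> ((u \<in> S) \<noteq> (v \<in> S))))"

end

theory Submission
  imports Defs
begin

text \<open>Moving along the edges of colour \<open>i\<close> defines an involution \<open>nbr i\<close> of the vertex set,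
  and the square axiom makes these involutions commute.  Hence \<open>A \<mapsto> nbrs A b\<close>, the composite
  of the \<open>nbr i\<close> for \<open>i \<in> A\<close> applied to a base vertex \<open>b\<close>, maps \<open>Pow {1..N}\<close> onto the connected
  graph, and bijectively because there are \<open>2^N\<close> vertices.  Every \<open>nbr k\<close> preserves adjacency and
  colours; the odd-dashing of the \<open>(j,k)\<close>-squares says that it preserves parities after switching
  a suitable set of vertices.  So the commuting product \<open>nbrs T\<close> with \<open>nbrs T u = v\<close> is an
  automorphism, and it preserves the bipartition because \<open>T\<close> has even size when \<open>u\<close>, \<open>v\<close> are
  both bosons or both fermions.\<close>

lemma odd_of_bool_sum4:
  "odd (of_bool a + of_bool b + of_bool c + of_bool d :: nat) \<longleftrightarrow> (a \<noteq> (b \<noteq> (c \<noteq> d)))"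
  by (cases a; cases b; cases c; cases d) auto

locale adinkra_graph =
  fixes N :: nat and V :: "'v set" and E :: "'v \<Rightarrow> 'v \<Rightarrow> bool"
    and boson :: "'v \<Rightarrow> bool" and col :: "'v \<Rightarrow> 'v \<Rightarrow> nat"
    and par :: "'v \<Rightarrow> 'v \<Rightarrow> bool"
  assumes adinkra: "adinkra N V E boson col par"
begin

lemma V_nonempty: "V \<noteq> {}"
  using adinkra unfolding adinkra_def by metis

lemma edge_in_V: "E x y \<Longrightarrow> x \<in> V \<and> y \<in> V"
  using adinkra unfolding adinkra_def by metis

lemma edge_sym: "E x y \<Longrightarrow> E y x"
  using adinkra unfolding adinkra_def by metis

lemma connected: "x \<in> V \<Longrightarrow> y \<in> V \<Longrightarrow> E\<^sup>*\<^sup>* x y"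
  using adinkra unfolding adinkra_def by metis

lemma edge_boson_ne: "E x y \<Longrightarrow> boson x \<noteq> boson y"
  using adinkra unfolding adinkra_def by metis

lemma col_sym: "E x y \<Longrightarrow> col y x = col x y"
  using adinkra unfolding adinkra_def by metis

lemma col_range: "E x y \<Longrightarrow> col x y \<in> {1..N}"
  using adinkra unfolding adinkra_def by metis

lemma par_sym: "E x y \<Longrightarrow> par y x = par x y"
  using adinkra unfolding adinkra_def by metis

lemma ex1_edge_of_col: "x \<in> V \<Longrightarrow> i \<in> {1..N} \<Longrightarrow> \<exists>!y. E x y \<and> col x y = i"
  using adinkra unfolding adinkra_def by metis

lemma square_closes:
  assumes "i \<noteq> j" "E u v" "col u v = i" "E v w" "col v w = j"
  shows "\<exists>x. E w x \<and> col w x = i \<and> E x u \<and> col x u = j"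
  using adinkra assms unfolding adinkra_def by metis

lemma square_odd_dashed:
  assumes "i \<noteq> j" "E u v" "col u v = i" "E v w" "col v w = j"
    "E w x" "col w x = i" "E x u" "col x u = j"
  shows "par u v \<noteq> (par v w \<noteq> (par w x \<noteq> par x u))"
proof -
  have "odd (of_bool (par u v) + of_bool (par v w) + of_bool (par w x) + of_bool (par x u) :: nat)"
    using adinkra assms unfolding adinkra_def by metis
  then show ?thesis
    unfolding odd_of_bool_sum4 .
qed

text \<open>Outside \<open>V\<close> and for non-colours \<open>nbr i\<close> is the identity, so that the \<open>nbr i\<close> are
  involutions and commute on the whole type.\<close>
definition nbr :: "nat \<Rightarrow> 'v \<Rightarrow> 'v" where
  "nbr i x = (if x \<in> V \<and> i \<in> {1..N} then THE y. E x y \<and> col x y = i else x)"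

lemma nbr_edge: "x \<in> V \<Longrightarrow> i \<in> {1..N} \<Longrightarrow> E x (nbr i x) \<and> col x (nbr i x) = i"
  unfolding nbr_def using theI'[OF ex1_edge_of_col] by simp

lemma nbr_eqI:
  assumes "E x y" "col x y = i"
  shows "nbr i x = y"
proof -
  have "x \<in> V" "i \<in> {1..N}"
    using assms edge_in_V col_range by auto
  moreover have "(THE y. E x y \<and> col x y = i) = y"
    using calculation assms by (intro the1_equality ex1_edge_of_col) auto
  ultimately show ?thesis
    unfolding nbr_def by simp
qed

lemma edge_eq_nbr: "E x y \<Longrightarrow> y = nbr (col x y) x"
  by (simp add: nbr_eqI)

lemma nbr_trivial: "x \<notin> V \<or> i \<notin> {1..N} \<Longrightarrow> nbr i x = x"
  unfolding nbr_def by auto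

lemma nbr_in_V:
  assumes "x \<in> V"
  shows "nbr i x \<in> V"
proof (cases "i \<in> {1..N}")
  case True
  then show ?thesis
    using edge_in_V nbr_edge[OF assms True] by blast
qed (simp add: assms nbr_trivial)

lemma nbr_nbr [simp]: "nbr i (nbr i x) = x"
proof (cases "x \<in> V \<and> i \<in> {1..N}")
  case True
  then have e: "E x (nbr i x)" and c: "col x (nbr i x) = i"
    using nbr_edge by auto
  show ?thesis
    using nbr_eqI[OF edge_sym[OF e]] col_sym[OF e] c by simp
qed (auto simp: nbr_trivial)

lemma nbr_commute: "nbr i (nbr j x) = nbr j (nbr i x)"
proof (cases "i \<noteq> j \<and> x \<in> V \<and> i \<in> {1..N} \<and> j \<in> {1..N}")
  case True
  define y where "y = nbr i x"
  define z where "z = nbr j y"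
  have y: "E x y" "col x y = i" "y \<in> V"
    using True nbr_edge nbr_in_V y_def by auto
  have z: "E y z" "col y z = j"
    using True nbr_edge y z_def by auto
  obtain w where w: "E z w" "col z w = i" "E w x" "col w x = j"
    using square_closes[OF _ y(1,2) z] True by blast
  have "nbr j x = w"
    using nbr_eqI edge_sym[OF w(3)] col_sym[OF w(3)] w(4) by simp
  then have "nbr i (nbr j x) = nbr i w"
    by simp
  also have "\<dots> = z"
    using w(1,2) nbr_eqI nbr_nbr by metis
  finally show ?thesis
    unfolding z_def y_def .
qed (auto simp: nbr_trivial)

lemma nbr_preserves_edge:
  assumes "E x y"
  shows "E (nbr k x) (nbr k y) \<and> col (nbr k x) (nbr k y) = col x y"
proof (cases "k \<in> {1..N} \<and> k \<noteq> col x y")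
  case True
  have "nbr k y = nbr (col x y) (nbr k x)"
    using assms edge_eq_nbr nbr_commute by metis
  moreover have "nbr k x \<in> V"
    using assms edge_in_V nbr_in_V by blast
  ultimately show ?thesis
    using assms col_range nbr_edge by simp
next
  case False
  then consider "k = col x y" | "k \<notin> {1..N}"
    by blast
  then show ?thesis
  proof cases
    case 1
    then have "nbr k x = y" "nbr k y = x"
      using assms edge_sym[OF assms] col_sym[OF assms] nbr_eqI by simp_all
    then show ?thesis
      using edge_sym[OF assms] col_sym[OF assms] by simp
  qed (simp add: assms nbr_trivial)
qed

interpretation nbr: comp_fun_commute nbr
  by unfold_locales (auto simp: nbr_commute)

definition nbrs :: "nat set \<Rightarrow> 'v \<Rightarrow> 'v" where
  "nbrs A x = Finite_Set.fold nbr x A"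

lemma nbrs_empty [simp]: "nbrs {} x = x"
  by (simp add: nbrs_def)

lemma nbrs_insert: "finite A \<Longrightarrow> k \<notin> A \<Longrightarrow> nbrs (insert k A) x = nbr k (nbrs A x)"
  by (simp add: nbrs_def)

lemma nbr_nbrs_commute: "finite A \<Longrightarrow> nbr k (nbrs A x) = nbrs A (nbr k x)"
  unfolding nbrs_def by (rule nbr.fold_fun_left_comm)

lemma nbrs_in_V: "finite A \<Longrightarrow> x \<in> V \<Longrightarrow> nbrs A x \<in> V"
  by (induction A rule: finite_induct) (auto simp: nbrs_insert nbr_in_V)

lemma nbrs_nbrs [simp]: "finite A \<Longrightarrow> nbrs A (nbrs A x) = x"
  by (induction A rule: finite_induct) (simp_all add: nbrs_insert nbr_nbrs_commute[symmetric])

lemma nbrs_sym_diff_singleton: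
  assumes "finite A"
  shows "nbrs (sym_diff A {k}) x = nbr k (nbrs A x)"
proof (cases "k \<in> A")
  case True
  then have "nbrs A x = nbr k (nbrs (A - {k}) x)"
    using assms nbrs_insert[of "A - {k}" k] by (simp add: insert_absorb)
  with True show ?thesis
    by (simp add: Un_absorb2)
qed (use assms nbrs_insert in simp)

lemma nbrs_preserves_edge:
  "finite A \<Longrightarrow> E x y \<Longrightarrow> E (nbrs A x) (nbrs A y) \<and> col (nbrs A x) (nbrs A y) = col x y"
  by (induction A rule: finite_induct) (simp_all add: nbrs_insert nbr_preserves_edge)

lemma boson_nbrs:
  "finite A \<Longrightarrow> A \<subseteq> {1..N} \<Longrightarrow> x \<in> V \<Longrightarrow> boson (nbrs A x) = (boson x = even (card A))"
proof (induction A rule: finite_induct)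
  case (insert k A)
  have "boson (nbr k (nbrs A x)) \<noteq> boson (nbrs A x)"
    using insert nbrs_in_V nbr_edge edge_boson_ne by (metis insert_subset)
  with insert show ?case
    by (auto simp: nbrs_insert)
qed simp

lemma nbrs_image_Pow: "b \<in> V \<Longrightarrow> (\<lambda>A. nbrs A b) ` Pow {1..N} = V"
proof (intro subset_antisym subsetI)
  fix x assume "b \<in> V" "x \<in> V"
  then have "E\<^sup>*\<^sup>* b x"
    by (rule connected)
  then show "x \<in> (\<lambda>A. nbrs A b) ` Pow {1..N}"
  proof (induction rule: rtranclp_induct)
    case base
    show ?case by (rule image_eqI[of _ _ "{}"]) auto
  next
    case (step y z)
    then obtain A where A: "A \<subseteq> {1..N}" "y = nbrs A b"
      by auto
    then have "z = nbrs (sym_diff A {col y z}) b"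
      using step(2) edge_eq_nbr nbrs_sym_diff_singleton finite_subset by (metis finite_atLeastAtMost)
    moreover have "sym_diff A {col y z} \<in> Pow {1..N}"
      using A col_range step(2) by auto
    ultimately show ?case
      by blast
  qed
qed (auto intro: nbrs_in_V finite_subset)

definition preserves_parity_upto_switching :: "('v \<Rightarrow> 'v) \<Rightarrow> bool" where
  "preserves_parity_upto_switching f \<longleftrightarrow>
     (\<exists>S \<subseteq> V. \<forall>x y. E x y \<longrightarrow> par (f x) (f y) = (par x y \<noteq> ((x \<in> S) \<noteq> (y \<in> S))))"

lemma preserves_parity_upto_switching_id: "preserves_parity_upto_switching id"
  unfolding preserves_parity_upto_switching_def by auto

lemma preserves_parity_upto_switching_comp:
  assumes f: "preserves_parity_upto_switching f" and h: "preserves_parity_upto_switching h"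
    and h_edge: "\<And>x y. E x y \<Longrightarrow> E (h x) (h y)"
  shows "preserves_parity_upto_switching (f \<circ> h)"
proof -
  obtain Sf where Sf: "\<forall>x y. E x y \<longrightarrow> par (f x) (f y) = (par x y \<noteq> ((x \<in> Sf) \<noteq> (y \<in> Sf)))"
    using f unfolding preserves_parity_upto_switching_def by blast
  obtain Sh where Sh: "\<forall>x y. E x y \<longrightarrow> par (h x) (h y) = (par x y \<noteq> ((x \<in> Sh) \<noteq> (y \<in> Sh)))"
    using h unfolding preserves_parity_upto_switching_def by blast
  show ?thesis
    unfolding preserves_parity_upto_switching_def
  proof (intro exI[of _ "{x \<in> V. (x \<in> Sh) \<noteq> (h x \<in> Sf)}"] conjI allI impI)
    fix x y assume "E x y"
    then show "par ((f \<circ> h) x) ((f \<circ> h) y) = (par x y \<noteq>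
        ((x \<in> {x \<in> V. (x \<in> Sh) \<noteq> (h x \<in> Sf)}) \<noteq> (y \<in> {x \<in> V. (x \<in> Sh) \<noteq> (h x \<in> Sf)})))"
      using Sf Sh h_edge edge_in_V by auto
  qed auto
qed

text \<open>The \<open>(j,k)\<close>-square through an edge \<open>x y\<close> of colour \<open>j \<noteq> k\<close> and its image under \<open>nbr k\<close>
  gives \<open>par (nbr k x) (nbr k y) = par x y \<noteq> (q x \<noteq> \<not> q y)\<close> with \<open>q x = par x (nbr k x)\<close>; a
  function \<open>c\<close> changing along exactly the edges of colour \<open>j \<noteq> k\<close> absorbs the negation.\<close>
lemma preserves_parity_upto_switching_nbr:
  fixes c :: "'v \<Rightarrow> bool"
  assumes k: "k \<in> {1..N}" and c: "\<And>x y. E x y \<Longrightarrow> c y = c x \<longleftrightarrow> col x y = k"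
  shows "preserves_parity_upto_switching (nbr k)"
  unfolding preserves_parity_upto_switching_def
proof (intro exI[of _ "{x \<in> V. par x (nbr k x) \<noteq> c x}"] conjI allI impI)
  fix x y assume xy: "E x y"
  have x: "x \<in> V" and y: "y \<in> V"
    using xy edge_in_V by auto
  let ?S = "{x \<in> V. par x (nbr k x) \<noteq> c x}"
  show "par (nbr k x) (nbr k y) = (par x y \<noteq> ((x \<in> ?S) \<noteq> (y \<in> ?S)))"
  proof (cases "col x y = k")
    case True
    have "nbr k x = y" "nbr k y = x"
      using True xy edge_sym[OF xy] col_sym[OF xy] nbr_eqI by simp_all
    moreover have "c y = c x" "par y x = par x y"
      using True c[OF xy] par_sym[OF xy] by auto
    ultimately show ?thesis
      using x y by auto
  next
    case False
    have kx: "E x (nbr k x)" "col x (nbr k x) = k" and ky: "E y (nbr k y)" "col y (nbr k y) = k"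
      using nbr_edge x y k by auto
    have "par x (nbr k x) \<noteq> (par (nbr k x) (nbr k y) \<noteq> (par (nbr k y) y \<noteq> par y x))"
    proof (rule square_odd_dashed[OF _ kx nbr_preserves_edge[OF xy, THEN conjunct1]])
      show "k \<noteq> col x y" "col (nbr k x) (nbr k y) = col x y"
        using False nbr_preserves_edge[OF xy] by auto
      show "E (nbr k y) y" "col (nbr k y) y = k" "E y x" "col y x = col x y"
        using ky edge_sym[OF ky(1)] col_sym[OF ky(1)] edge_sym[OF xy] col_sym[OF xy] by simp_all
    qed
    moreover have "c y = (\<not> c x)" "par (nbr k y) y = par y (nbr k y)" "par y x = par x y"
      using False c[OF xy] par_sym[OF ky(1)] par_sym[OF xy] by auto
    ultimately show ?thesis
      using x y by auto
  qed
qed auto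

end

locale cube_adinkra_graph = adinkra_graph +
  assumes card_V: "card V = 2 ^ N"
begin

lemma bij_betw_nbrs_Pow: "b \<in> V \<Longrightarrow> bij_betw (\<lambda>A. nbrs A b) (Pow {1..N}) V"
  unfolding bij_betw_def
  using nbrs_image_Pow card_V by (simp add: eq_card_imp_inj_on card_Pow)

definition coords :: "_ \<Rightarrow> _ \<Rightarrow> nat set" where
  "coords b x = inv_into (Pow {1..N}) (\<lambda>A. nbrs A b) x"

lemma coords_subset: "b \<in> V \<Longrightarrow> x \<in> V \<Longrightarrow> coords b x \<subseteq> {1..N}"
  unfolding coords_def using inv_into_into[of x "\<lambda>A. nbrs A b" "Pow {1..N}"] nbrs_image_Pow
  by auto

lemma nbrs_coords: "b \<in> V \<Longrightarrow> x \<in> V \<Longrightarrow> nbrs (coords b x) b = x"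
  unfolding coords_def using f_inv_into_f[of x "\<lambda>A. nbrs A b" "Pow {1..N}"] nbrs_image_Pow
  by auto

lemma coords_edge:
  assumes b: "b \<in> V" and xy: "E x y"
  shows "coords b y = sym_diff (coords b x) {col x y}"
  unfolding coords_def[of b y]
proof (rule inv_into_f_eq)
  have x: "x \<in> V" and sub: "coords b x \<subseteq> {1..N}"
    using b xy edge_in_V coords_subset by auto
  show "inj_on (\<lambda>A. nbrs A b) (Pow {1..N})"
    using bij_betw_nbrs_Pow[OF b] by (rule bij_betw_imp_inj_on)
  show "sym_diff (coords b x) {col x y} \<in> Pow {1..N}"
    using sub col_range[OF xy] by auto
  show "nbrs (sym_diff (coords b x) {col x y}) b = y"
    using nbrs_sym_diff_singleton[OF finite_subset[OF sub]] nbrs_coords[OF b x]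
      edge_eq_nbr[OF xy] by simp
qed

text \<open>The grading \<open>c\<close> required by \<open>preserves_parity_upto_switching_nbr\<close> is
  \<open>boson x \<noteq> k \<in> coords b x\<close>: along an edge the boson flag always flips, and membership of \<open>k\<close>
  flips exactly along colour \<open>k\<close>.\<close>
lemma preserves_parity_upto_switching_nbrs:
  "A \<subseteq> {1..N} \<Longrightarrow> preserves_parity_upto_switching (nbrs A)"
proof (induction A rule: infinite_finite_induct)
  case empty
  have "nbrs {} = id"
    by (simp add: fun_eq_iff)
  with preserves_parity_upto_switching_id show ?case
    by (simp only:)
next
  case (insert k A)
  obtain b where b: "b \<in> V"
    using V_nonempty by blast
  have "preserves_parity_upto_switching (nbr k)"
  proof (rule preserves_parity_upto_switching_nbr)
    show "k \<in> {1..N}"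
      using insert by simp
    show "(boson y \<noteq> (k \<in> coords b y)) = (boson x \<noteq> (k \<in> coords b x)) \<longleftrightarrow> col x y = k"
      if "E x y" for x y
      using coords_edge[OF b that] edge_boson_ne[OF that] by auto
  qed
  then have "preserves_parity_upto_switching (nbr k \<circ> nbrs A)"
    using insert nbrs_preserves_edge preserves_parity_upto_switching_comp by simp
  moreover have "nbrs (insert k A) = nbr k \<circ> nbrs A"
    using insert by (simp add: nbrs_insert fun_eq_iff)
  ultimately show ?case
    by (simp only:)
qed (use finite_subset in blast)

lemma adinkra_automorphism_nbrs:
  assumes A: "A \<subseteq> {1..N}" and even: "even (card A)"
  shows "adinkra_automorphism V E boson col par (nbrs A)"
  unfolding adinkra_automorphism_def
proof (intro conjI ballI allI impI)
  have fin: "finite A"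
    using A finite_subset by blast
  show "bij_betw (nbrs A) V V"
    using fin by (intro bij_betw_byWitness[where f' = "nbrs A"]) (auto intro: nbrs_in_V)
  show "E (nbrs A x) (nbrs A y) \<longleftrightarrow> E x y" for x y
    using nbrs_preserves_edge[OF fin, of x y] nbrs_preserves_edge[OF fin, of "nbrs A x" "nbrs A y"]
    by (auto simp: fin)
  show "col (nbrs A x) (nbrs A y) = col x y" if "E x y" for x y
    using nbrs_preserves_edge[OF fin that] by simp
  show "boson (nbrs A x) = boson x" if "x \<in> V" for x
    using boson_nbrs[OF fin A that] even by simp
  show "\<exists>S\<subseteq>V. \<forall>x y. E x y \<longrightarrow> par (nbrs A x) (nbrs A y) = (par x y \<noteq> ((x \<in> S) \<noteq> (y \<in> S)))"
    using preserves_parity_upto_switching_nbrs[OF A]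
    unfolding preserves_parity_upto_switching_def .
qed

end

theorem mainTheorem3:
  fixes N :: nat and V :: "'v set" and E :: "'v \<Rightarrow> 'v \<Rightarrow> bool"
    and boson :: "'v \<Rightarrow> bool" and col :: "'v \<Rightarrow> 'v \<Rightarrow> nat"
    and par :: "'v \<Rightarrow> 'v \<Rightarrow> bool"
  assumes "cube_adinkra N V E boson col par"
    and "u \<in> V" and "v \<in> V" and "boson u = boson v"
  shows "\<exists>f. adinkra_automorphism V E boson col par f \<and> f u = v"
proof -
  interpret cube_adinkra_graph N V E boson col par
    using assms(1) unfolding cube_adinkra_def by unfold_locales auto
  define T where "T = coords u v"
  have T: "T \<subseteq> {1..N}" and u_to_v: "nbrs T u = v"
    using assms(2,3) coords_subset nbrs_coords T_def by auto
  then have "even (card T)"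
    using boson_nbrs[of T u] assms(2,4) finite_subset by fastforce
  then have "adinkra_automorphism V E boson col par (nbrs T)"
    using adinkra_automorphism_nbrs T by simp
  then show ?thesis
    using u_to_v by blast
qed

end
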